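(* Let $G=(V,E)$ be a graph and $X\in\{0,1\}^V$ any marking vector, and let $I_X$ be the independent set returned by FIND-IS on $X$. Then $H(I_X)\ge S(X)/2$.
   Context: Identify $V$ with $[n]$ so that $d(u)\le d(v)$ whenever $u<v$, where $d(v)$ is the degree of $v$ and $N(v)$ its neighborhood. FIND-IS on marking vector $X$: vertices $v$ with $X(v)=1$ are marked; for every edge with both endpoints marked, the endpoint with smaller index (lower degree, ties broken by index) is unmarked; $I_X$ is the set of vertices remaining marked, i.e. $I_X=\{w: X(w)=1$ and no neighbor $u>w$ has $X(u)=1\}$. For an independent set $I$, $H(I)$ is the number of edges of $G$ having at least one endpoint in $I\cup N(I)$ (the edges deleted when forming the residual graph). For each vertex $v$ let $G(v)=\sum_{w\in N(v)}1/d(w)$ and $a_v=\min(1,1/G(v))$. Define $$S(v,X)=a_v\sum_{w\in N(v)}X(w)-a_v^2\sum_{\substack{w<w'\\ w,w'\in N(v)}}X(w)X(w')-a_v\sum_{w\in N(v)}\ \sum_{\substack{u:\,(w,u)\in E\\ w<u}}X(w)X(u),$$ and $S(X)=\sum_v d(v)S(v,X)$. *)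

theory Defs
  imports Complex_Main
begin

definition simple_graph :: "nat \<Rightarrow> (nat \<Rightarrow> nat \<Rightarrow> bool) \<Rightarrow> bool" where
  "simple_graph n E \<longleftrightarrow> (\<forall>u v. E u v \<longrightarrow> u < n \<and> v < n \<and> u \<noteq> v \<and> E v u)"

definition nbhd :: "nat \<Rightarrow> (nat \<Rightarrow> nat \<Rightarrow> bool) \<Rightarrow> nat \<Rightarrow> nat set" where
  "nbhd n E v = {w. w < n \<and> E v w}"

definition deg :: "nat \<Rightarrow> (nat \<Rightarrow> nat \<Rightarrow> bool) \<Rightarrow> nat \<Rightarrow> nat" where
  "deg n E v = card (nbhd n E v)"

definition find_is :: "nat \<Rightarrow> (nat \<Rightarrow> nat \<Rightarrow> bool) \<Rightarrow> (nat \<Rightarrow> bool) \<Rightarrow> nat set" where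
  "find_is n E X = {w. w < n \<and> X w \<and> (\<forall>u. E w u \<and> w < u \<longrightarrow> \<not> X u)}"

definition H :: "nat \<Rightarrow> (nat \<Rightarrow> nat \<Rightarrow> bool) \<Rightarrow> nat set \<Rightarrow> nat" where
  "H n E I = (let C = I \<union> {v. v < n \<and> (\<exists>w\<in>I. E w v)} in
     card {(u, v). u < v \<and> v < n \<and> E u v \<and> (u \<in> C \<or> v \<in> C)})"

definition Gsum :: "nat \<Rightarrow> (nat \<Rightarrow> nat \<Rightarrow> bool) \<Rightarrow> nat \<Rightarrow> real" where
  "Gsum n E v = (\<Sum>w\<in>nbhd n E v. 1 / real (deg n E w))"

definition acoef :: "nat \<Rightarrow> (nat \<Rightarrow> nat \<Rightarrow> bool) \<Rightarrow> nat \<Rightarrow> real" where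
  "acoef n E v = min 1 (1 / Gsum n E v)"

definition Sv :: "nat \<Rightarrow> (nat \<Rightarrow> nat \<Rightarrow> bool) \<Rightarrow> nat \<Rightarrow> (nat \<Rightarrow> bool) \<Rightarrow> real" where
  "Sv n E v X =
     acoef n E v * (\<Sum>w\<in>nbhd n E v. of_bool (X w))
   - (acoef n E v)^2 * (\<Sum>(w, w')\<in>{(w, w'). w \<in> nbhd n E v \<and> w' \<in> nbhd n E v \<and> w < w'}.
                          of_bool (X w) * of_bool (X w'))
   - acoef n E v * (\<Sum>w\<in>nbhd n E v. \<Sum>u\<in>{u. u < n \<and> E w u \<and> w < u}.
                          of_bool (X w) * of_bool (X u))"

definition Stot :: "nat \<Rightarrow> (nat \<Rightarrow> nat \<Rightarrow> bool) \<Rightarrow> (nat \<Rightarrow> bool) \<Rightarrow> real" where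
  "Stot n E X = (\<Sum>v<n. real (deg n E v) * Sv n E v X)"

end

theory Submission
  imports Defs
begin

text \<open>Per vertex, write \<open>k\<close> for the number of marked neighbours of \<open>v\<close>, \<open>q = k(k-1)/2\<close> for the
number of marked pairs among them, and \<open>T\<close> for the number of marked edges leaving them upwards.
Then, with \<open>a = a\<^sub>v\<close>, \<open>S(v,X) = a k - a\<^sup>2 q - a T\<close>. Since \<open>a \<le> 1\<close>, the quadratic \<open>a k - a\<^sup>2 k(k-1)/2\<close> never
exceeds 1, so \<open>S(v,X) \<le> 1\<close>. If \<open>v\<close> is not in \<open>I\<^sub>X \<union> N(I\<^sub>X)\<close>, every marked neighbour of \<open>v\<close> was
unmarked by FIND-IS, i.e. has a marked upper neighbour, so \<open>k \<le> T\<close> and \<open>S(v,X) \<le> 0\<close>. Hence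
\<open>S(X)\<close> is at most the degree sum over \<open>I\<^sub>X \<union> N(I\<^sub>X)\<close>, which counts every deleted edge at most twice.\<close>

definition covered :: "nat \<Rightarrow> (nat \<Rightarrow> nat \<Rightarrow> bool) \<Rightarrow> nat set \<Rightarrow> nat set" where
  "covered n E I = I \<union> {v. v < n \<and> (\<exists>w\<in>I. E w v)}"

definition edges_touching :: "nat \<Rightarrow> (nat \<Rightarrow> nat \<Rightarrow> bool) \<Rightarrow> nat set \<Rightarrow> (nat \<times> nat) set" where
  "edges_touching n E C = {(u, v). u < v \<and> v < n \<and> E u v \<and> (u \<in> C \<or> v \<in> C)}"

lemma H_eq_card_edges_touching: "H n E I = card (edges_touching n E (covered n E I))"
  by (simp add: H_def edges_touching_def covered_def)

lemma finite_nbhd [simp]: "finite (nbhd n E v)"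
  by (simp add: nbhd_def)

lemma simple_graph_edgeD:
  assumes "simple_graph n E" "E u v"
  shows "u < n" "v < n" "u \<noteq> v" "E v u"
  using assms by (auto simp: simple_graph_def)

lemma card_ordered_pairs:
  fixes K :: "'a::linorder set"
  assumes "finite K"
  shows "2 * card {(w, w'). w \<in> K \<and> w' \<in> K \<and> w < w'} + card K = card K ^ 2"
proof -
  let ?L = "{(w, w'). w \<in> K \<and> w' \<in> K \<and> w < w'}"
  let ?R = "{(w, w'). w \<in> K \<and> w' \<in> K \<and> w' < w}"
  let ?D = "(\<lambda>x. (x, x)) ` K"
  have fin: "finite ?L" "finite ?R"
    by (rule finite_subset[of _ "K \<times> K"]; use assms in auto)+
  have "?R = prod.swap ` ?L" by auto
  then have card_R: "card ?R = card ?L" by (simp add: card_image)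
  have card_D: "card ?D = card K" by (simp add: card_image inj_on_def)
  have "K \<times> K = (?L \<union> ?R) \<union> ?D" by auto
  then have "card (K \<times> K) = card (?L \<union> ?R) + card ?D"
    by (simp only:) (rule card_Un_disjoint; use fin assms in auto)
  also have "card (?L \<union> ?R) = card ?L + card ?R"
    by (rule card_Un_disjoint) (use fin in auto)
  finally have "card (K \<times> K) = card ?L + card ?R + card ?D" .
  then show ?thesis using card_R card_D by (simp add: card_cartesian_product power2_eq_square)
qed

lemma sum_of_bool_pairs:
  fixes N :: "'a::linorder set"
  assumes "finite N"
  shows "(\<Sum>(w, w')\<in>{(w, w'). w \<in> N \<and> w' \<in> N \<and> w < w'}. of_bool (X w) * (of_bool (X w') :: real))
       = real (card {(w, w'). w \<in> N \<inter> {w. X w} \<and> w' \<in> N \<inter> {w. X w} \<and> w < w'})"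
proof -
  let ?P = "{(w, w'). w \<in> N \<and> w' \<in> N \<and> w < w'}"
  have "finite ?P" by (rule finite_subset[of _ "N \<times> N"]) (use assms in auto)
  moreover have "{(w, w'). w \<in> N \<inter> {w. X w} \<and> w' \<in> N \<inter> {w. X w} \<and> w < w'}
               = ?P \<inter> {(w, w'). X w \<and> X w'}" by auto
  ultimately show ?thesis
    by (simp add: split_def of_bool_conj[symmetric] del: of_bool_conj)
qed

lemma sum_deg_le_twice_card_edges_touching:
  assumes "simple_graph n E"
  shows "(\<Sum>v\<in>{v. v < n \<and> v \<in> C}. deg n E v) \<le> 2 * card (edges_touching n E C)"
proof -
  let ?A = "{v. v < n \<and> v \<in> C}"
  let ?Ed = "edges_touching n E C"
  have fin_Ed: "finite ?Ed"
    by (rule finite_subset[of _ "{..<n} \<times> {..<n}"]) (auto simp: edges_touching_def)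
  have "(\<Sum>v\<in>?A. deg n E v) = card (SIGMA v:?A. nbhd n E v)"
    by (simp add: deg_def card_SigmaI)
  also have "(SIGMA v:?A. nbhd n E v) \<subseteq> ?Ed \<union> prod.swap ` ?Ed"
  proof
    fix p assume "p \<in> (SIGMA v:?A. nbhd n E v)"
    then obtain v w where p: "p = (v, w)" "v \<in> C" "E v w" by (auto simp: nbhd_def)
    have "v \<noteq> w" "v < n" "w < n" "E w v" using simple_graph_edgeD[OF assms \<open>E v w\<close>] by auto
    with p have "(v, w) \<in> ?Ed \<or> (w, v) \<in> ?Ed"
      by (cases "v < w") (auto simp: edges_touching_def)
    then show "p \<in> ?Ed \<union> prod.swap ` ?Ed" using p by force
  qed
  then have "card (SIGMA v:?A. nbhd n E v) \<le> card (?Ed \<union> prod.swap ` ?Ed)"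
    using fin_Ed by (intro card_mono) auto
  also have "\<dots> \<le> card ?Ed + card (prod.swap ` ?Ed)" by (rule card_Un_le)
  also have "card (prod.swap ` ?Ed) \<le> card ?Ed" by (rule card_image_le[OF fin_Ed])
  finally show ?thesis by simp
qed

lemma quadratic_score_le_1:
  fixes a q :: real and k :: nat
  assumes "a \<le> 1" and "2 * q + real k = real k ^ 2"
  shows "a * real k - a\<^sup>2 * q \<le> 1"
proof (cases "k \<le> 1")
  case True
  then have "k = 0 \<or> k = 1" by auto
  then show ?thesis using assms by auto
next
  case False
  then have "real k ^ 2 \<ge> 2 * real k" by (simp add: power2_eq_square)
  then have "q \<ge> real k ^ 2 / 4" using assms(2) by linarith
  then have "a\<^sup>2 * q \<ge> a\<^sup>2 * (real k ^ 2 / 4)" by (intro mult_left_mono) auto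
  moreover have "(a * real k / 2 - 1)\<^sup>2 \<ge> 0" by simp
  ultimately show ?thesis by (simp add: power2_eq_square algebra_simps)
qed

lemma acoef_nonneg: "0 \<le> acoef n E v"
proof -
  have "0 \<le> Gsum n E v" unfolding Gsum_def by (rule sum_nonneg) simp
  then show ?thesis by (simp add: acoef_def)
qed

lemma acoef_le_1: "acoef n E v \<le> 1"
  by (simp add: acoef_def)

lemma Sv_eq:
  fixes n :: nat and E :: "nat \<Rightarrow> nat \<Rightarrow> bool" and X :: "nat \<Rightarrow> bool" and v :: nat
  defines "K \<equiv> nbhd n E v \<inter> {w. X w}"
  shows "Sv n E v X
    = acoef n E v * real (card K)
    - (acoef n E v)\<^sup>2 * real (card {(w, w'). w \<in> K \<and> w' \<in> K \<and> w < w'})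
    - acoef n E v * (\<Sum>w\<in>nbhd n E v. \<Sum>u\<in>{u. u < n \<and> E w u \<and> w < u}. of_bool (X w) * of_bool (X u))"
  unfolding Sv_def K_def sum_of_bool_pairs[OF finite_nbhd] by simp

lemma Sv_le_1: "Sv n E v X \<le> 1"
proof -
  let ?K = "nbhd n E v \<inter> {w. X w}"
  let ?T = "\<Sum>w\<in>nbhd n E v. \<Sum>u\<in>{u. u < n \<and> E w u \<and> w < u}. of_bool (X w) * (of_bool (X u) :: real)"
  have "2 * real (card {(w, w'). w \<in> ?K \<and> w' \<in> ?K \<and> w < w'}) + real (card ?K) = real (card ?K) ^ 2"
    using arg_cong[where f = real, OF card_ordered_pairs[of ?K]] by simp
  then have "acoef n E v * real (card ?K)
      - (acoef n E v)\<^sup>2 * real (card {(w, w'). w \<in> ?K \<and> w' \<in> ?K \<and> w < w'}) \<le> 1"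
    by (rule quadratic_score_le_1[OF acoef_le_1])
  moreover have "0 \<le> acoef n E v * ?T"
    by (intro mult_nonneg_nonneg acoef_nonneg sum_nonneg) auto
  ultimately show ?thesis unfolding Sv_eq by linarith
qed

lemma marked_upper_nbr_if_not_find_is:
  assumes "simple_graph n E" "w < n" "X w" "w \<notin> find_is n E X"
  obtains u where "u < n" "E w u" "w < u" "X u"
  using assms simple_graph_edgeD(2)[OF assms(1)] by (auto simp: find_is_def)

lemma Sv_nonpos_if_not_covered:
  assumes G: "simple_graph n E" and v: "v < n" "v \<notin> covered n E (find_is n E X)"
  shows "Sv n E v X \<le> 0"
proof -
  let ?K = "nbhd n E v \<inter> {w. X w}"
  let ?T = "\<lambda>w. \<Sum>u\<in>{u. u < n \<and> E w u \<and> w < u}. of_bool (X w) * (of_bool (X u) :: real)"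
  have "of_bool (X w) \<le> ?T w" if w: "w \<in> nbhd n E v" for w
  proof (cases "X w")
    case True
    from w have "E v w" by (simp add: nbhd_def)
    with G have "w < n" "E w v" by (auto dest: simple_graph_edgeD)
    with v have "w \<notin> find_is n E X" by (auto simp: covered_def)
    with G \<open>w < n\<close> True obtain u where "u < n" "E w u" "w < u" "X u"
      by (rule marked_upper_nbr_if_not_find_is)
    then have "of_bool (X w) * of_bool (X u) \<le> ?T w"
      by (intro member_le_sum) auto
    then show ?thesis using True \<open>X u\<close> by simp
  qed (simp add: sum_nonneg)
  then have "real (card ?K) \<le> (\<Sum>w\<in>nbhd n E v. ?T w)"
    using sum_mono[of "nbhd n E v" "\<lambda>w. of_bool (X w) :: real" ?T] by simp
  then have "acoef n E v * real (card ?K) \<le> acoef n E v * (\<Sum>w\<in>nbhd n E v. ?T w)"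
    by (rule mult_left_mono) (rule acoef_nonneg)
  moreover have "0 \<le> (acoef n E v)\<^sup>2 * real (card {(w, w'). w \<in> ?K \<and> w' \<in> ?K \<and> w < w'})"
    by simp
  ultimately show ?thesis unfolding Sv_eq by linarith
qed

lemma Sv_le_covered:
  assumes "simple_graph n E" "v < n"
  shows "Sv n E v X \<le> of_bool (v \<in> covered n E (find_is n E X))"
proof (cases "v \<in> covered n E (find_is n E X)")
  case True
  then show ?thesis using Sv_le_1 by simp
next
  case False
  then show ?thesis using Sv_nonpos_if_not_covered[OF assms False] by simp
qed

theorem proposition3p1:
  fixes n :: nat and E :: "nat \<Rightarrow> nat \<Rightarrow> bool" and X :: "nat \<Rightarrow> bool"
  assumes "simple_graph n E"
    and "\<And>u v. u < v \<Longrightarrow> v < n \<Longrightarrow> deg n E u \<le> deg n E v"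
  shows "real (H n E (find_is n E X)) \<ge> Stot n E X / 2"
proof -
  define C where "C = covered n E (find_is n E X)"
  have "Stot n E X \<le> (\<Sum>v<n. real (deg n E v) * of_bool (v \<in> C))"
    unfolding Stot_def C_def
    by (intro sum_mono mult_left_mono Sv_le_covered[OF assms(1)]) auto
  also have "\<dots> = (\<Sum>v\<in>{v. v < n \<and> v \<in> C}. real (deg n E v))"
    by (rule sum.mono_neutral_cong_right) auto
  also have "\<dots> \<le> 2 * real (card (edges_touching n E C))"
    using of_nat_mono[OF sum_deg_le_twice_card_edges_touching[OF assms(1), of C]] by simp
  finally show ?thesis
    by (simp add: C_def H_eq_card_edges_touching)
qed

end
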